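(* Let $N\ge 1$, let $a_1,\dots,a_N>0$, $T_1,\dots,T_N\ge 0$ and $P_{\mathrm{tot}}>0$, let $c=\ln 2$, $\bar P_i=(2^{T_i}-1)/a_i$, and let $W_0$ be the principal branch of the Lambert W function. For $\lambda>0$ define $$P_i(\lambda)=\frac{2}{\lambda c^2}\,W_0\!\left(\frac{\lambda c^2}{2a_i}\,2^{T_i}\right)-\frac1{a_i},\qquad P_i^*(\lambda)=\min\{\bar P_i,\max\{0,P_i(\lambda)\}\},\qquad S(\lambda)=\sum_{i=1}^N P_i^*(\lambda).$$ Suppose $P_{\mathrm{tot}}<\sum_{i=1}^N\bar P_i$. Then there exists $\lambda^*>0$ with $S(\lambda^* )=P_{\mathrm{tot}}$, and for any such $\lambda^*$ the vector $(P_1^*(\lambda^* ),\dots,P_N^*(\lambda^* ))$ is an optimal solution of the problem of minimizing $\sum_{i=1}^N(\log_2(1+a_iP_i)-T_i)^2$ subject to $\sum_i P_i\le P_{\mathrm{tot}}$ and $P_i\ge 0$ for all $i$. Moreover, $P_i^*(\lambda)=0$ whenever $\lambda\ge 2a_iT_i/c$.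
   Context: For $z\ge 0$, $W_0(z)$ is the unique $w\ge 0$ with $we^w=z$. *)

theory Defs
  imports Complex_Main
begin

text \<open>Principal branch of Lambert W on [0, inf): the unique w >= 0 with w e^w = z.\<close>
definition lambertW0 :: "real \<Rightarrow> real" where
  "lambertW0 z = (THE w. w \<ge> 0 \<and> w * exp w = z)"

definition Pbar :: "real \<Rightarrow> real \<Rightarrow> real" where
  "Pbar a T = (2 powr T - 1) / a"

definition Plam :: "real \<Rightarrow> real \<Rightarrow> real \<Rightarrow> real" where
  "Plam a T lam = 2 / (lam * (ln 2)\<^sup>2) * lambertW0 (lam * (ln 2)\<^sup>2 / (2 * a) * 2 powr T) - 1 / a"

definition Pstar :: "real \<Rightarrow> real \<Rightarrow> real \<Rightarrow> real" where
  "Pstar a T lam = min (Pbar a T) (max 0 (Plam a T lam))"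

definition objective :: "nat \<Rightarrow> (nat \<Rightarrow> real) \<Rightarrow> (nat \<Rightarrow> real) \<Rightarrow> (nat \<Rightarrow> real) \<Rightarrow> real" where
  "objective N a T P = (\<Sum>i=1..N. (log 2 (1 + a i * P i) - T i)\<^sup>2)"

definition feasible :: "nat \<Rightarrow> real \<Rightarrow> (nat \<Rightarrow> real) \<Rightarrow> bool" where
  "feasible N Ptot P \<longleftrightarrow> (\<Sum>i=1..N. P i) \<le> Ptot \<and> (\<forall>i\<in>{1..N}. P i \<ge> 0)"

definition optimal :: "nat \<Rightarrow> (nat \<Rightarrow> real) \<Rightarrow> (nat \<Rightarrow> real) \<Rightarrow> real \<Rightarrow> (nat \<Rightarrow> real) \<Rightarrow> bool" where
  "optimal N a T Ptot P \<longleftrightarrow> feasible N Ptot P \<and>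
     (\<forall>Q. feasible N Ptot Q \<longrightarrow> objective N a T P \<le> objective N a T Q)"

end

theory Submission
  imports Defs
begin

(* Write each power through its rate r = log2 (1 + a P), so P = (2^r - 1)/a. For a multiplier lam,
   the per-user Lagrangian (r - T)^2 + lam P becomes (r - T)^2 + (lam/a) 2^r - lam/a, a convex
   function of r whose stationary point is T - W0(lam c^2 2^T / (2a)) / c. P_i^*(lam) is exactly
   the power at the projection of this point onto r >= 0, so it minimises the Lagrangian over
   P >= 0, and when the budget is met with equality weak duality yields optimality. The sum S is
   continuous for lam > 0, tends to the sum of the Pbar_i as lam -> 0+, and vanishes once
   lam >= 2 a_i T_i / c for all i, so the intermediate value theorem provides lam^*. *)

lemma mult_exp_strict_mono: "0 \<le> x \<Longrightarrow> x < y \<Longrightarrow> x * exp x < y * exp (y::real)"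
proof -
  assume "0 \<le> x" "x < y"
  then have "x * exp x \<le> x * exp y" by (intro mult_left_mono) auto
  also have "\<dots> < y * exp y" using \<open>0 \<le> x\<close> \<open>x < y\<close> by (intro mult_strict_right_mono) auto
  finally show ?thesis .
qed

lemma mult_exp_le_mult_exp_iff:
  "0 \<le> x \<Longrightarrow> 0 \<le> y \<Longrightarrow> x * exp x \<le> y * exp y \<longleftrightarrow> x \<le> (y::real)"
  using mult_exp_strict_mono[of x y] mult_exp_strict_mono[of y x]
  by (cases "x = y") (auto simp: not_le[symmetric])

lemma mult_exp_attains: "0 \<le> (z::real) \<Longrightarrow> \<exists>w. 0 \<le> w \<and> w \<le> z \<and> w * exp w = z"
  by (intro IVT') (auto simp: mult_le_cancel_left1 intro!: continuous_intros)

lemma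
  assumes "0 \<le> z"
  shows lambertW0_nonneg: "0 \<le> lambertW0 z"
    and lambertW0_mult_exp: "lambertW0 z * exp (lambertW0 z) = z"
proof -
  have "\<exists>!w. 0 \<le> w \<and> w * exp w = z"
    using mult_exp_attains[OF assms] mult_exp_le_mult_exp_iff by (metis order_antisym order_refl)
  then have "0 \<le> lambertW0 z \<and> lambertW0 z * exp (lambertW0 z) = z"
    unfolding lambertW0_def by (rule theI')
  then show "0 \<le> lambertW0 z" "lambertW0 z * exp (lambertW0 z) = z" by auto
qed

lemma lambertW0_eqI:
  assumes "0 \<le> w" "w * exp w = z"
  shows "lambertW0 z = w"
proof -
  have "0 \<le> z" using assms by auto
  then show ?thesis
    using assms lambertW0_nonneg lambertW0_mult_exp mult_exp_le_mult_exp_iff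
    by (metis order_antisym order_refl)
qed

lemma le_lambertW0_iff: "0 \<le> x \<Longrightarrow> 0 \<le> z \<Longrightarrow> x \<le> lambertW0 z \<longleftrightarrow> x * exp x \<le> z"
  using mult_exp_le_mult_exp_iff[of x "lambertW0 z"] lambertW0_nonneg lambertW0_mult_exp by metis

lemma lambertW0_le_self:
  assumes "0 \<le> z"
  shows "lambertW0 z \<le> z"
proof -
  have "lambertW0 z \<le> lambertW0 z * exp (lambertW0 z)"
    using lambertW0_nonneg[OF assms] by (simp add: mult_le_cancel_left1)
  then show ?thesis using lambertW0_mult_exp[OF assms] by simp
qed

lemma continuous_on_lambertW0_atLeastAtMost: "continuous_on {0..Z} lambertW0"
proof -
  have "continuous_on ((\<lambda>w. w * exp w) ` {0..Z}) lambertW0"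
    by (rule continuous_on_inv) (auto intro!: continuous_intros lambertW0_eqI)
  moreover have "{0..Z} \<subseteq> (\<lambda>w. w * exp w) ` {0..Z}"
    using mult_exp_attains by fastforce
  ultimately show ?thesis by (rule continuous_on_subset)
qed

lemma continuous_on_lambertW0: "continuous_on {0..} lambertW0"
proof (rule continuous_on_eq_continuous_within[THEN iffD2], intro ballI)
  fix z :: real assume "z \<in> {0..}"
  have "continuous (at z within {0..z + 1}) lambertW0"
    using continuous_on_lambertW0_atLeastAtMost \<open>z \<in> {0..}\<close>
    by (simp add: continuous_on_eq_continuous_within)
  moreover have "at z within {0..z + 1} = at z within {0..}"
    by (rule at_within_nhd[of _ "{..<z + 1}"]) auto
  ultimately show "continuous (at z within {0..}) lambertW0" by simp
qed

lemma Pbar_mono: "0 < a \<Longrightarrow> mono (Pbar a)"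
  unfolding Pbar_def by (intro monoI divide_right_mono) auto

lemma Pbar_0 [simp]: "Pbar a 0 = 0"
  unfolding Pbar_def by simp

lemma Pbar_nonneg: "0 < a \<Longrightarrow> 0 \<le> r \<Longrightarrow> 0 \<le> Pbar a r"
  using Pbar_mono[of a] Pbar_0[of a] by (metis monoD)

lemma log_Pbar: "0 < a \<Longrightarrow> log 2 (1 + a * Pbar a r) = r"
  unfolding Pbar_def by simp

lemma Pbar_log: "0 < a \<Longrightarrow> 0 \<le> q \<Longrightarrow> Pbar a (log 2 (1 + a * q)) = q"
  unfolding Pbar_def by (simp add: add_pos_nonneg)

definition stationary_rate :: "real \<Rightarrow> real \<Rightarrow> real \<Rightarrow> real" where
  "stationary_rate a T lam = T - lambertW0 (lam * (ln 2)\<^sup>2 / (2 * a) * 2 powr T) / ln 2"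

lemma stationary_rate_le: "0 < a \<Longrightarrow> 0 \<le> lam \<Longrightarrow> stationary_rate a T lam \<le> T"
  unfolding stationary_rate_def by (simp add: lambertW0_nonneg)

lemma powr_stationary_rate:
  fixes a T lam :: real
  assumes "0 < a" "0 < lam"
  defines "w \<equiv> lambertW0 (lam * (ln 2)\<^sup>2 / (2 * a) * 2 powr T)"
  shows "2 powr stationary_rate a T lam = 2 * a / (lam * (ln 2)\<^sup>2) * w"
proof -
  have "w * exp w = lam * (ln 2)\<^sup>2 / (2 * a) * 2 powr T"
    unfolding w_def using assms by (intro lambertW0_mult_exp) simp
  then have "2 * a / (lam * (ln 2)\<^sup>2) * w = 2 powr T * exp (- w)"
    using assms by (simp add: exp_minus field_simps)
  also have "\<dots> = exp (T * ln 2 - w)"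
    by (simp add: powr_def exp_diff exp_minus divide_inverse)
  also have "T * ln 2 - w = stationary_rate a T lam * ln 2"
    unfolding stationary_rate_def w_def[symmetric] by (simp add: left_diff_distrib)
  also have "exp \<dots> = 2 powr stationary_rate a T lam"
    by (simp add: powr_def)
  finally show ?thesis by simp
qed

lemma Plam_eq_Pbar_stationary_rate:
  "0 < a \<Longrightarrow> 0 < lam \<Longrightarrow> Plam a T lam = Pbar a (stationary_rate a T lam)"
  unfolding Plam_def Pbar_def powr_stationary_rate by (simp add: field_simps)

lemma stationary_rate_critical:
  fixes a T lam :: real
  assumes "0 < a" "0 < lam"
  defines "r \<equiv> stationary_rate a T lam"
  shows "2 * (r - T) + lam / a * ln 2 * 2 powr r = 0"
  unfolding r_def powr_stationary_rate[OF assms(1,2)] using assms(1,2)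
  by (simp add: stationary_rate_def field_simps power2_eq_square)

lemma Pstar_eq_Pbar_max_stationary_rate:
  assumes "0 < a" "0 < lam" "0 \<le> T"
  shows "Pstar a T lam = Pbar a (max 0 (stationary_rate a T lam))"
proof -
  let ?r = "stationary_rate a T lam"
  have "Pstar a T lam = min (Pbar a T) (max (Pbar a 0) (Pbar a ?r))"
    unfolding Pstar_def Plam_eq_Pbar_stationary_rate[OF assms(1,2)] by simp
  also have "\<dots> = Pbar a (min T (max 0 ?r))"
    using Pbar_mono[OF assms(1)] by (simp only: max_of_mono min_of_mono)
  also have "min T (max 0 ?r) = max 0 ?r"
    using stationary_rate_le[of a lam T] assms by simp
  finally show ?thesis .
qed

lemma powr_tangent_le:
  fixes b r s :: real
  assumes "0 < b"
  shows "b powr s * (1 + ln b * (r - s)) \<le> b powr r"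
proof -
  have "b powr s * (1 + ln b * (r - s)) \<le> b powr s * exp (ln b * (r - s))"
    by (intro mult_left_mono exp_ge_add_one_self) auto
  also have "\<dots> = b powr r"
    using assms by (simp add: powr_def exp_add[symmetric] algebra_simps)
  finally show ?thesis .
qed

lemma rate_cost_le:
  fixes b K T r0 r :: real
  assumes "1 < b" "0 \<le> K" "2 * (r0 - T) + K * ln b * b powr r0 = 0" "0 \<le> r"
  shows "(max 0 r0 - T)\<^sup>2 + K * b powr max 0 r0 \<le> (r - T)\<^sup>2 + K * b powr r"
proof -
  define s where "s = max 0 r0"
  define slope where "slope = 2 * (s - T) + K * ln b * b powr s"
  have "(s - T)\<^sup>2 + 2 * (s - T) * (r - s) \<le> (r - T)\<^sup>2"
    using zero_le_power2[of "r - s"] by (simp add: power2_eq_square algebra_simps)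
  moreover have "K * b powr s + K * ln b * b powr s * (r - s) \<le> K * b powr r"
    using mult_left_mono[OF powr_tangent_le[of b s r] \<open>0 \<le> K\<close>] \<open>1 < b\<close>
    by (simp add: algebra_simps)
  moreover have "0 \<le> (r - s) * slope"
  proof (cases "0 \<le> r0")
    case True
    then show ?thesis using assms(3) by (simp add: s_def slope_def)
  next
    case False
    have "b powr r0 < 1" using False \<open>1 < b\<close> by (intro powr_less_one) auto
    then have "K * ln b * b powr r0 \<le> K * ln b * 1"
      using assms(1,2) by (intro mult_left_mono) auto
    then have "0 \<le> slope" using False assms(1,3) by (simp add: s_def slope_def)
    then show ?thesis using False \<open>0 \<le> r\<close> by (simp add: s_def)
  qed
  ultimately show ?thesis unfolding s_def[symmetric] slope_def by (simp add: algebra_simps)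
qed

lemma lagrangian_Pstar_le:
  fixes a T lam q :: real
  assumes "0 < a" "0 < lam" "0 \<le> T" "0 \<le> q"
  shows "(log 2 (1 + a * Pstar a T lam) - T)\<^sup>2 + lam * Pstar a T lam
    \<le> (log 2 (1 + a * q) - T)\<^sup>2 + lam * q"
proof -
  have cost: "lam * Pbar a r = lam / a * 2 powr r - lam / a" for r
    unfolding Pbar_def by (simp add: diff_divide_distrib right_diff_distrib)
  define r0 where "r0 = stationary_rate a T lam"
  define r where "r = log 2 (1 + a * q)"
  have "0 \<le> r" unfolding r_def using assms by (simp add: add_pos_nonneg)
  have "(log 2 (1 + a * Pstar a T lam) - T)\<^sup>2 + lam * Pstar a T lam
      = (max 0 r0 - T)\<^sup>2 + lam / a * 2 powr max 0 r0 - lam / a"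
    using Pstar_eq_Pbar_max_stationary_rate[OF assms(1-3)] log_Pbar[OF assms(1)] cost
    by (simp add: r0_def)
  also have "\<dots> \<le> (r - T)\<^sup>2 + lam / a * 2 powr r - lam / a"
    using rate_cost_le[of 2 "lam / a" r0 T r] stationary_rate_critical[OF assms(1,2)] assms \<open>0 \<le> r\<close>
    by (simp add: r0_def)
  also have "\<dots> = (log 2 (1 + a * q) - T)\<^sup>2 + lam * q"
    using cost[of r] Pbar_log[OF assms(1,4)] by (simp add: r_def)
  finally show ?thesis .
qed

lemma optimal_if_minimizes_lagrangian:
  fixes lam :: real
  assumes feasible: "feasible N Ptot P" and budget: "(\<Sum>i=1..N. P i) = Ptot" and "0 \<le> lam"
    and minimizes: "\<And>i q. i \<in> {1..N} \<Longrightarrow> 0 \<le> q \<Longrightarrow>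
      (log 2 (1 + a i * P i) - T i)\<^sup>2 + lam * P i \<le> (log 2 (1 + a i * q) - T i)\<^sup>2 + lam * q"
  shows "optimal N a T Ptot P"
  unfolding optimal_def
proof (intro conjI allI impI)
  show "feasible N Ptot P" by (fact feasible)
  fix Q assume "feasible N Ptot Q"
  then have Q_nonneg: "\<forall>i\<in>{1..N}. 0 \<le> Q i" and Q_budget: "(\<Sum>i=1..N. Q i) \<le> Ptot"
    unfolding feasible_def by auto
  have "objective N a T P + lam * Ptot
      = (\<Sum>i=1..N. (log 2 (1 + a i * P i) - T i)\<^sup>2 + lam * P i)"
    unfolding objective_def budget[symmetric] by (simp add: sum.distrib sum_distrib_left)
  also have "\<dots> \<le> (\<Sum>i=1..N. (log 2 (1 + a i * Q i) - T i)\<^sup>2 + lam * Q i)"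
    using minimizes Q_nonneg by (intro sum_mono) auto
  also have "\<dots> = objective N a T Q + lam * (\<Sum>i=1..N. Q i)"
    unfolding objective_def by (simp add: sum.distrib sum_distrib_left)
  also have "\<dots> \<le> objective N a T Q + lam * Ptot"
    using Q_budget \<open>0 \<le> lam\<close> by (simp add: mult_left_mono)
  finally show "objective N a T P \<le> objective N a T Q" by simp
qed

lemma Pstar_nonneg: "0 < a \<Longrightarrow> 0 \<le> T \<Longrightarrow> 0 \<le> Pstar a T lam"
  unfolding Pstar_def using Pbar_nonneg by simp

lemma Pstar_eq_0:
  fixes a T lam :: real
  assumes "0 < a" "0 < lam" "0 \<le> T" "2 * a * T / ln 2 \<le> lam"
  shows "Pstar a T lam = 0"
proof -
  let ?z = "lam * (ln 2)\<^sup>2 / (2 * a) * 2 powr T"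
  have "2 * a * T \<le> lam * ln 2" using assms(4) by (simp add: divide_le_eq)
  then have "ln 2 * T \<le> lam * (ln 2)\<^sup>2 / (2 * a)"
    using assms(1) by (simp add: le_divide_eq power2_eq_square algebra_simps)
  then have "ln 2 * T * exp (ln 2 * T) \<le> lam * (ln 2)\<^sup>2 / (2 * a) * exp (ln 2 * T)"
    by (rule mult_right_mono) simp
  also have "\<dots> = ?z" by (simp add: powr_def mult.commute)
  finally have "ln 2 * T * exp (ln 2 * T) \<le> ?z" .
  then have "ln 2 * T \<le> lambertW0 ?z"
    using le_lambertW0_iff assms by simp
  then have "stationary_rate a T lam \<le> 0"
    unfolding stationary_rate_def by (simp add: le_divide_eq mult.commute)
  then show ?thesis
    using Pstar_eq_Pbar_max_stationary_rate[OF assms(1-3)] by (simp add: max_absorb1)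
qed

lemma continuous_on_Pstar:
  assumes "0 < a" "0 \<le> T"
  shows "continuous_on {0<..} (Pstar a T)"
proof -
  have "continuous_on {0<..} (\<lambda>lam. Pbar a (max 0 (stationary_rate a T lam)))"
    unfolding Pbar_def stationary_rate_def using assms
    by (intro continuous_intros continuous_on_compose2[OF continuous_on_lambertW0]) auto
  then show ?thesis
    using Pstar_eq_Pbar_max_stationary_rate assms by (subst continuous_on_cong) auto
qed

lemma tendsto_Pstar_at_right_0:
  assumes "0 < a" "0 \<le> T"
  shows "(Pstar a T \<longlongrightarrow> Pbar a T) (at_right 0)"
proof -
  let ?W = "\<lambda>lam. lambertW0 (lam * (ln 2)\<^sup>2 / (2 * a) * 2 powr T)"
  have "(?W \<longlongrightarrow> 0) (at_right 0)"
  proof (rule tendsto_sandwich)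
    show "\<forall>\<^sub>F lam in at_right 0. 0 \<le> ?W lam"
      using eventually_at_right_less
      by (rule eventually_mono) (use assms in \<open>simp add: lambertW0_nonneg\<close>)
    show "\<forall>\<^sub>F lam in at_right 0. ?W lam \<le> lam * (ln 2)\<^sup>2 / (2 * a) * 2 powr T"
      using eventually_at_right_less
      by (rule eventually_mono) (use assms in \<open>simp add: lambertW0_le_self\<close>)
    show "((\<lambda>lam. lam * (ln 2)\<^sup>2 / (2 * a) * 2 powr T) \<longlongrightarrow> 0) (at_right 0)"
      using assms(1) by (auto intro!: tendsto_eq_intros)
  qed simp
  then have "((\<lambda>lam. Pbar a (max 0 (stationary_rate a T lam)))
      \<longlongrightarrow> Pbar a (max 0 (T - 0 / ln 2))) (at_right 0)"
    unfolding Pbar_def stationary_rate_def using assms(1) by (intro tendsto_intros) auto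
  moreover have "\<forall>\<^sub>F lam in at_right 0. Pbar a (max 0 (stationary_rate a T lam)) = Pstar a T lam"
    using eventually_at_right_less
    by (rule eventually_mono) (use Pstar_eq_Pbar_max_stationary_rate assms in auto)
  ultimately show ?thesis
    using assms(2) by (auto intro: Lim_transform_eventually)
qed

lemma exists_sum_Pstar_eq:
  fixes I :: "'i set" and a T :: "'i \<Rightarrow> real"
  assumes "finite I" "\<forall>i\<in>I. 0 < a i" "\<forall>i\<in>I. 0 \<le> T i"
    and "0 < Ptot" "Ptot < (\<Sum>i\<in>I. Pbar (a i) (T i))"
  shows "\<exists>lam>0. (\<Sum>i\<in>I. Pstar (a i) (T i) lam) = Ptot"
proof -
  let ?S = "\<lambda>lam. \<Sum>i\<in>I. Pstar (a i) (T i) lam"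
  have "(?S \<longlongrightarrow> (\<Sum>i\<in>I. Pbar (a i) (T i))) (at_right 0)"
    using assms(2,3) by (intro tendsto_sum tendsto_Pstar_at_right_0) auto
  then have "\<forall>\<^sub>F lam in at_right 0. Ptot < ?S lam"
    using assms(5) by (rule order_tendstoD(1))
  then have "\<exists>lam. 0 < lam \<and> Ptot < ?S lam"
    by (intro eventually_happens'[OF _ eventually_conj[OF eventually_at_right_less]]) simp_all
  then obtain l0 where "0 < l0" "Ptot < ?S l0" by blast
  define l1 where "l1 = l0 + (\<Sum>i\<in>I. 2 * a i * T i / ln 2)"
  have threshold_nonneg: "0 \<le> 2 * a i * T i / ln 2" if "i \<in> I" for i
    using assms(2,3) that by fastforce
  have "l0 \<le> l1"
    unfolding l1_def using threshold_nonneg by (simp add: sum_nonneg)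
  have "2 * a i * T i / ln 2 \<le> l1" if "i \<in> I" for i
  proof -
    have "2 * a i * T i / ln 2 \<le> (\<Sum>i\<in>I. 2 * a i * T i / ln 2)"
      using assms(1) that by (intro member_le_sum threshold_nonneg) auto
    then show ?thesis unfolding l1_def using \<open>0 < l0\<close> by simp
  qed
  then have "?S l1 = 0"
    using assms(2,3) \<open>0 < l0\<close> \<open>l0 \<le> l1\<close> by (intro sum.neutral ballI Pstar_eq_0) auto
  moreover have "continuous_on {l0..l1} ?S"
    using assms(2,3) \<open>0 < l0\<close>
    by (intro continuous_on_sum continuous_on_subset[OF continuous_on_Pstar]) auto
  ultimately obtain lam where "l0 \<le> lam" "?S lam = Ptot"
    using IVT2'[of ?S l1 Ptot l0] \<open>Ptot < ?S l0\<close> \<open>l0 \<le> l1\<close> assms(4) by auto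
  moreover have "0 < lam" using \<open>0 < l0\<close> \<open>l0 \<le> lam\<close> by simp
  ultimately show ?thesis by blast
qed

theorem mainTheorem8:
  fixes N :: nat and a T :: "nat \<Rightarrow> real" and Ptot :: real
  assumes "N \<ge> 1"
    and "\<forall>i\<in>{1..N}. a i > 0"
    and "\<forall>i\<in>{1..N}. T i \<ge> 0"
    and "Ptot > 0"
    and "Ptot < (\<Sum>i=1..N. Pbar (a i) (T i))"
  shows "(\<exists>lam>0. (\<Sum>i=1..N. Pstar (a i) (T i) lam) = Ptot)
    \<and> (\<forall>lam>0. (\<Sum>i=1..N. Pstar (a i) (T i) lam) = Ptot \<longrightarrow>
          optimal N a T Ptot (\<lambda>i. Pstar (a i) (T i) lam))
    \<and> (\<forall>i\<in>{1..N}. \<forall>lam>0. lam \<ge> 2 * a i * T i / ln 2 \<longrightarrow> Pstar (a i) (T i) lam = 0)"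
proof (intro conjI allI impI ballI)
  show "\<exists>lam>0. (\<Sum>i=1..N. Pstar (a i) (T i) lam) = Ptot"
    using assms(2-5) by (intro exists_sum_Pstar_eq) auto
next
  fix lam :: real
  assume "0 < lam" and budget: "(\<Sum>i=1..N. Pstar (a i) (T i) lam) = Ptot"
  show "optimal N a T Ptot (\<lambda>i. Pstar (a i) (T i) lam)"
  proof (rule optimal_if_minimizes_lagrangian[OF _ budget less_imp_le[OF \<open>0 < lam\<close>]])
    show "feasible N Ptot (\<lambda>i. Pstar (a i) (T i) lam)"
      unfolding feasible_def using budget assms(2,3) Pstar_nonneg by auto
  qed (use \<open>0 < lam\<close> assms(2,3) lagrangian_Pstar_le in auto)
next
  fix i and lam :: real
  assume "i \<in> {1..N}" "0 < lam" "2 * a i * T i / ln 2 \<le> lam"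
  then show "Pstar (a i) (T i) lam = 0"
    using assms(2,3) by (intro Pstar_eq_0) auto
qed

end
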